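(* Let $a=0.19$, $b=0.5095$, $f^-(x)=x$, and $f^+(x)=0$ for $x<a$, $f^+(x)=\frac{(x-a)^2}{(b-a)^2}$ for $a\le x\le b$, $f^+(x)=1$ for $x>b$. Then for all $x,y,z\in[0,1]$, with $q=f^+(x)$, $ALG=y(1-z)+z(1-y)+(1-q)(1-z)+(1-q)(1-y)$ and $LP=x(1-yz)+(1-y)(1-qz)+(1-z)(1-qy)$, we have $2\,LP\ge ALG$; i.e., $2LP(uvw)\ge ALG(uvw)$ for all $(+,-,-)$-triangles.
   Context: For a triangle with one positive edge of length $x$ and two negative edges of lengths $y,z$, with cut probabilities $f^+(x)$, $f^-(y)$, $f^-(z)$, the per-triangle quantities of the pivot rounding algorithm are $ALG=f^-(y)(1-f^-(z))+f^-(z)(1-f^-(y))+(1-f^+(x))(1-f^-(z))+(1-f^+(x))(1-f^-(y))$ and $LP=x(1-f^-(y)f^-(z))+(1-y)(1-f^+(x)f^-(z))+(1-z)(1-f^+(x)f^-(y))$. *)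

theory Defs
  imports Complex_Main
begin

definition pa :: real where "pa = 0.19"
definition pb :: real where "pb = 0.5095"

definition f_minus :: "real \<Rightarrow> real" where "f_minus x = x"

definition f_plus :: "real \<Rightarrow> real" where
  "f_plus x = (if x < pa then 0 else if x \<le> pb then (x - pa)^2 / (pb - pa)^2 else 1)"

text \<open>Per-triangle quantities for a (+,-,-) triangle with positive edge length x and
  negative edge lengths y, z, given cut probability functions fp and fm.\<close>
definition ALG :: "(real \<Rightarrow> real) \<Rightarrow> (real \<Rightarrow> real) \<Rightarrow> real \<Rightarrow> real \<Rightarrow> real \<Rightarrow> real" where
  "ALG fp fm x y z = fm y * (1 - fm z) + fm z * (1 - fm y)
     + (1 - fp x) * (1 - fm z) + (1 - fp x) * (1 - fm y)"

definition LP :: "(real \<Rightarrow> real) \<Rightarrow> (real \<Rightarrow> real) \<Rightarrow> real \<Rightarrow> real \<Rightarrow> real \<Rightarrow> real" where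
  "LP fp fm x y z = x * (1 - fm y * fm z) + (1 - y) * (1 - fp x * fm z)
     + (1 - z) * (1 - fp x * fm y)"

end

theory Submission
  imports Defs
begin

text \<open>With \<open>q = f\<^sup>+(x)\<close>, \<open>u = 1 - y\<close>, \<open>v = 1 - z\<close> the gap \<open>2 LP - ALG\<close> equals
  \<open>(u + v)(2x - q) + uv(2 - 2x + 4q)\<close>, so the inequality holds as soon as
  \<open>0 \<le> q \<le> 2x\<close>. For the quadratic rounding function this bound is the choice of
  \<open>a, b\<close>: on \<open>[a, b]\<close> we have \<open>f\<^sup>+(x) \<le> (x - a)/(b - a) \<le> 2x\<close>, the last step
  because \<open>b \<le> a / (1 - 2(b - a))\<close>.\<close>

lemma two_LP_minus_ALG_eq:
  "2 * LP fp f_minus x y z - ALG fp f_minus x y z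
     = ((1 - y) + (1 - z)) * (2 * x - fp x) + (1 - y) * (1 - z) * (2 - 2 * x + 4 * fp x)"
  unfolding LP_def ALG_def f_minus_def by (simp add: algebra_simps)

lemma ALG_le_two_LP:
  assumes "0 \<le> fp x" "fp x \<le> 2 * x" "x \<le> 1" "y \<le> 1" "z \<le> 1"
  shows "ALG fp f_minus x y z \<le> 2 * LP fp f_minus x y z"
proof -
  have "0 \<le> ((1 - y) + (1 - z)) * (2 * x - fp x)"
    using assms by simp
  moreover have "0 \<le> (1 - y) * (1 - z) * (2 - 2 * x + 4 * fp x)"
    using assms by simp
  ultimately show ?thesis
    using two_LP_minus_ALG_eq[of fp x y z] by linarith
qed

lemma f_plus_nonneg: "0 \<le> f_plus x"
  by (simp add: f_plus_def)

lemma f_plus_le_double: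
  assumes "0 \<le> x"
  shows "f_plus x \<le> 2 * x"
proof -
  consider "x < pa" | "pa \<le> x" "x \<le> pb" | "pb < x" by linarith
  then show ?thesis
  proof cases
    case 1
    then show ?thesis using assms by (simp add: f_plus_def)
  next
    case 2
    define t where "t = (x - pa) / (pb - pa)"
    have gap: "0 < pb - pa" by (simp add: pa_def pb_def)
    have t: "0 \<le> t" "t \<le> 1"
      using 2 gap by (simp_all add: t_def)
    have "f_plus x = t\<^sup>2"
      using 2 by (simp add: f_plus_def t_def power_divide)
    also have "\<dots> \<le> t"
      using t by (simp add: power2_eq_square mult_left_le)
    also have "\<dots> \<le> 2 * x"
      using 2 gap by (simp add: t_def divide_le_eq pa_def pb_def)
    finally show ?thesis .
  next
    case 3
    then show ?thesis by (simp add: f_plus_def pa_def pb_def)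
  qed
qed

theorem corollary2:
  fixes x y z :: real
  assumes "x \<in> {0..1}" and "y \<in> {0..1}" and "z \<in> {0..1}"
  shows "2 * LP f_plus f_minus x y z \<ge> ALG f_plus f_minus x y z"
  using assms by (simp add: ALG_le_two_LP f_plus_nonneg f_plus_le_double)

end
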